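(* Two finite irreducible undirected graphs (loops allowed) have isomorphic associated lattices (as self-dual lattices) if and only if their radicals are isomorphic graphs.
   Context: For a graph $\nabla$ with vertex set $V$: $\nabla(x)$ is the set of vertices adjacent to $x$, $\nabla(X)=\bigcap_{x\in X}\nabla(x)$ (with $\nabla(\emptyset)=V$), and the associated lattice $\mathbb{L}(\nabla)=\{X\subseteq V:\nabla(\nabla(X))=X\}$, ordered by inclusion, is a self-dual lattice with duality map $X\mapsto\nabla(X)$; isomorphisms of self-dual lattices are order isomorphisms commuting with the duality maps. A graph is irreducible if distinct vertices have distinct neighborhoods. An element $a$ of a lattice is (completely) meet-irreducible if $a=\bigwedge A$ for a subset $A$ implies $a\in A$; a vertex $x$ is essential if $\nabla(x)$ is meet-irreducible in $\mathbb{L}(\nabla)$. The radical $\sqrt{\nabla}$ is the induced subgraph on the essential vertices. *)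

theory Defs
  imports Main
begin

definition undirected :: "'a set \<Rightarrow> ('a \<Rightarrow> 'a \<Rightarrow> bool) \<Rightarrow> bool" where
  "undirected V E \<longleftrightarrow> (\<forall>x\<in>V. \<forall>y\<in>V. E x y \<longrightarrow> E y x)"

definition nbhd :: "'a set \<Rightarrow> ('a \<Rightarrow> 'a \<Rightarrow> bool) \<Rightarrow> 'a \<Rightarrow> 'a set" where
  "nbhd V E x = {y \<in> V. E x y}"

text \<open>Common neighbourhood of a set X (equals V for X empty).\<close>
definition nabla :: "'a set \<Rightarrow> ('a \<Rightarrow> 'a \<Rightarrow> bool) \<Rightarrow> 'a set \<Rightarrow> 'a set" where
  "nabla V E X = {y \<in> V. \<forall>x\<in>X. E x y}"

definition assoc_lattice :: "'a set \<Rightarrow> ('a \<Rightarrow> 'a \<Rightarrow> bool) \<Rightarrow> 'a set set" where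
  "assoc_lattice V E = {X. X \<subseteq> V \<and> nabla V E (nabla V E X) = X}"

definition irreducible_graph :: "'a set \<Rightarrow> ('a \<Rightarrow> 'a \<Rightarrow> bool) \<Rightarrow> bool" where
  "irreducible_graph V E \<longleftrightarrow> (\<forall>x\<in>V. \<forall>y\<in>V. nbhd V E x = nbhd V E y \<longrightarrow> x = y)"

definition is_meet :: "'a set set \<Rightarrow> 'a set set \<Rightarrow> 'a set \<Rightarrow> bool" where
  "is_meet L A a \<longleftrightarrow> a \<in> L \<and> (\<forall>b\<in>A. a \<subseteq> b) \<and> (\<forall>c\<in>L. (\<forall>b\<in>A. c \<subseteq> b) \<longrightarrow> c \<subseteq> a)"

text \<open>Completely meet-irreducible element of the lattice L.\<close>
definition meet_irreducible :: "'a set set \<Rightarrow> 'a set \<Rightarrow> bool" where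
  "meet_irreducible L a \<longleftrightarrow> a \<in> L \<and> (\<forall>A. A \<subseteq> L \<longrightarrow> is_meet L A a \<longrightarrow> a \<in> A)"

definition essential :: "'a set \<Rightarrow> ('a \<Rightarrow> 'a \<Rightarrow> bool) \<Rightarrow> 'a \<Rightarrow> bool" where
  "essential V E x \<longleftrightarrow> x \<in> V \<and> meet_irreducible (assoc_lattice V E) (nbhd V E x)"

text \<open>Vertex set of the radical; its edges are those of E restricted to this set.\<close>
definition radical_vertices :: "'a set \<Rightarrow> ('a \<Rightarrow> 'a \<Rightarrow> bool) \<Rightarrow> 'a set" where
  "radical_vertices V E = {x \<in> V. essential V E x}"

definition graph_iso :: "'a set \<Rightarrow> ('a \<Rightarrow> 'a \<Rightarrow> bool) \<Rightarrow> 'b set \<Rightarrow> ('b \<Rightarrow> 'b \<Rightarrow> bool)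
    \<Rightarrow> ('a \<Rightarrow> 'b) \<Rightarrow> bool" where
  "graph_iso V1 E1 V2 E2 g \<longleftrightarrow> bij_betw g V1 V2 \<and>
     (\<forall>x\<in>V1. \<forall>y\<in>V1. E1 x y \<longleftrightarrow> E2 (g x) (g y))"

definition sd_lattice_iso :: "'a set \<Rightarrow> ('a \<Rightarrow> 'a \<Rightarrow> bool) \<Rightarrow> 'b set \<Rightarrow> ('b \<Rightarrow> 'b \<Rightarrow> bool)
    \<Rightarrow> ('a set \<Rightarrow> 'b set) \<Rightarrow> bool" where
  "sd_lattice_iso V1 E1 V2 E2 f \<longleftrightarrow>
     bij_betw f (assoc_lattice V1 E1) (assoc_lattice V2 E2) \<and>
     (\<forall>X\<in>assoc_lattice V1 E1. \<forall>Y\<in>assoc_lattice V1 E1. X \<subseteq> Y \<longleftrightarrow> f X \<subseteq> f Y) \<and>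
     (\<forall>X\<in>assoc_lattice V1 E1. f (nabla V1 E1 X) = nabla V2 E2 (f X))"

end

theory Submission
  imports Defs
begin

text \<open>
  Every element X of the associated lattice is the meet of the neighbourhoods \<nabla>(y), y \<in> \<nabla>(X),
  so the meet-irreducible elements are exactly the neighbourhoods of the essential vertices.
  In a finite graph, descending induction on X then shows that the essential vertices already
  determine the lattice: \<nabla>(R \<inter> \<nabla>(X)) = X for the radical vertex set R. Hence X \<mapsto> R \<inter> X is an
  isomorphism of self-dual lattices from \<L>(\<nabla>) onto \<L>(\<surd>\<nabla>), and isomorphic radicals give isomorphic
  lattices. Conversely, a self-dual isomorphism permutes the meet-irreducible elements, hence (for
  irreducible graphs) the essential vertices, and it preserves adjacency since x is adjacent
  to x' iff \<nabla>(\<nabla>(x')) \<subseteq> \<nabla>(x).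
\<close>

lemma meet_irreducibleD:
  "meet_irreducible L a \<Longrightarrow> A \<subseteq> L \<Longrightarrow> is_meet L A a \<Longrightarrow> a \<in> A"
  by (simp add: meet_irreducible_def)

lemma order_iso_is_meet_iff:
  assumes img: "f ` L1 = L2" and ord: "\<forall>X\<in>L1. \<forall>Y\<in>L1. X \<subseteq> Y \<longleftrightarrow> f X \<subseteq> f Y"
    and A: "A \<subseteq> L1" and a: "a \<in> L1"
  shows "is_meet L2 (f ` A) (f a) \<longleftrightarrow> is_meet L1 A a"
  unfolding img[symmetric] is_meet_def
  using a by (simp add: ord subsetD[OF A] cong: ball_cong)

lemma order_iso_meet_irreducible_iff:
  assumes bij: "bij_betw f L1 L2"
    and ord: "\<forall>X\<in>L1. \<forall>Y\<in>L1. X \<subseteq> Y \<longleftrightarrow> f X \<subseteq> f Y"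
    and a: "a \<in> L1"
  shows "meet_irreducible L2 (f a) \<longleftrightarrow> meet_irreducible L1 a"
proof
  have img: "f ` L1 = L2" and inj: "inj_on f L1" using bij by (auto simp: bij_betw_def)
  note meet_iff = order_iso_is_meet_iff[OF img ord]
  show "meet_irreducible L1 a" if irr: "meet_irreducible L2 (f a)"
    unfolding meet_irreducible_def
  proof (intro conjI allI impI)
    fix A assume A: "A \<subseteq> L1" "is_meet L1 A a"
    have "f ` A \<subseteq> L2" using A(1) img by blast
    moreover have "is_meet L2 (f ` A) (f a)" using meet_iff[OF A(1) a] A(2) by simp
    ultimately have "f a \<in> f ` A" by (rule meet_irreducibleD[OF irr])
    then show "a \<in> A" by (simp add: inj_on_image_mem_iff[OF inj a A(1)])
  qed (rule a)
  show "meet_irreducible L2 (f a)" if irr: "meet_irreducible L1 a"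
    unfolding meet_irreducible_def
  proof (intro conjI allI impI)
    fix B assume B: "B \<subseteq> L2" "is_meet L2 B (f a)"
    define A where "A = {X \<in> L1. f X \<in> B}"
    have A_L1: "A \<subseteq> L1" by (simp add: A_def)
    have "f ` A = B" using B(1) img by (auto simp: A_def)
    then have "is_meet L1 A a" using meet_iff[OF A_L1 a] B(2) by simp
    then have "a \<in> A" by (rule meet_irreducibleD[OF irr A_L1])
    then show "f a \<in> B" by (simp add: A_def)
  next
    show "f a \<in> L2" using a img by blast
  qed
qed

lemma nabla_subset: "nabla V E X \<subseteq> V"
  by (auto simp: nabla_def)

lemma nabla_antimono: "X \<subseteq> Y \<Longrightarrow> nabla V E Y \<subseteq> nabla V E X"
  by (auto simp: nabla_def)

lemma subset_nabla_nabla: "undirected V E \<Longrightarrow> X \<subseteq> V \<Longrightarrow> X \<subseteq> nabla V E (nabla V E X)"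
  by (auto simp: nabla_def undirected_def)

lemma nabla_nabla_nabla:
  assumes "undirected V E" and "X \<subseteq> V"
  shows "nabla V E (nabla V E (nabla V E X)) = nabla V E X"
  using nabla_antimono[OF subset_nabla_nabla[OF assms]] subset_nabla_nabla[OF assms(1) nabla_subset]
  by (rule subset_antisym)

lemma nabla_in_assoc_lattice: "undirected V E \<Longrightarrow> X \<subseteq> V \<Longrightarrow> nabla V E X \<in> assoc_lattice V E"
  by (simp add: assoc_lattice_def nabla_nabla_nabla nabla_subset)

lemma assoc_latticeD:
  assumes "X \<in> assoc_lattice V E"
  shows "X \<subseteq> V" and "nabla V E (nabla V E X) = X"
  using assms by (auto simp: assoc_lattice_def)

lemma nabla_restrict: "R \<subseteq> V \<Longrightarrow> nabla R E T = R \<inter> nabla V E T"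
  by (auto simp: nabla_def)

lemma nbhd_eq_nabla_singleton: "nbhd V E x = nabla V E {x}"
  by (auto simp: nbhd_def nabla_def)

lemma nbhd_in_assoc_lattice: "undirected V E \<Longrightarrow> x \<in> V \<Longrightarrow> nbhd V E x \<in> assoc_lattice V E"
  by (simp add: nbhd_eq_nabla_singleton nabla_in_assoc_lattice)

lemma edge_iff_nabla_nbhd_subset:
  assumes "undirected V E" and "x \<in> V" and "x' \<in> V"
  shows "E x x' \<longleftrightarrow> nabla V E (nbhd V E x') \<subseteq> nbhd V E x"
  using assms by (auto simp: nabla_def nbhd_def undirected_def)

lemma is_meet_nbhds:
  assumes u: "undirected V E" and X: "X \<in> assoc_lattice V E"
  shows "is_meet (assoc_lattice V E) (nbhd V E ` nabla V E X) X"
  unfolding is_meet_def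
proof (intro conjI ballI impI)
  show "X \<in> assoc_lattice V E" by fact
next
  fix b assume "b \<in> nbhd V E ` nabla V E X"
  then show "X \<subseteq> b"
    using u assoc_latticeD(1)[OF X] by (auto simp: nabla_def nbhd_def undirected_def)
next
  fix c assume c: "c \<in> assoc_lattice V E" "\<forall>b\<in>nbhd V E ` nabla V E X. c \<subseteq> b"
  then have "c \<subseteq> nabla V E (nabla V E X)"
    using assoc_latticeD(1)[OF c(1)] by (auto simp: nabla_def nbhd_def)
  then show "c \<subseteq> X" using assoc_latticeD(2)[OF X] by simp
qed

lemma meet_irreducible_imp_nbhd:
  assumes u: "undirected V E" and M: "meet_irreducible (assoc_lattice V E) M"
  shows "\<exists>y\<in>nabla V E M. M = nbhd V E y"
proof -
  have M_lattice: "M \<in> assoc_lattice V E" using M by (simp add: meet_irreducible_def)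
  have "nbhd V E ` nabla V E M \<subseteq> assoc_lattice V E"
    using nbhd_in_assoc_lattice[OF u] nabla_subset[of V E M] by blast
  moreover have "is_meet (assoc_lattice V E) (nbhd V E ` nabla V E M) M"
    by (rule is_meet_nbhds[OF u M_lattice])
  ultimately have "M \<in> nbhd V E ` nabla V E M"
    by (rule meet_irreducibleD[OF M])
  then show ?thesis by blast
qed

lemma radical_vertices_iff:
  "x \<in> radical_vertices V E \<longleftrightarrow> x \<in> V \<and> meet_irreducible (assoc_lattice V E) (nbhd V E x)"
  by (simp add: radical_vertices_def essential_def)

lemma radical_vertices_subset: "radical_vertices V E \<subseteq> V"
  by (auto simp: radical_vertices_def)

lemma bij_betw_nbhd_radical_vertices:
  assumes u: "undirected V E" and irr: "irreducible_graph V E"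
  shows "bij_betw (nbhd V E) (radical_vertices V E) {M. meet_irreducible (assoc_lattice V E) M}"
  unfolding bij_betw_def
proof
  show "inj_on (nbhd V E) (radical_vertices V E)"
    using irr radical_vertices_subset[of V E] unfolding inj_on_def irreducible_graph_def by blast
  show "nbhd V E ` radical_vertices V E = {M. meet_irreducible (assoc_lattice V E) M}"
  proof (intro equalityI subsetI)
    fix M assume "M \<in> {M. meet_irreducible (assoc_lattice V E) M}"
    then obtain y where "y \<in> nabla V E M" "M = nbhd V E y" "meet_irreducible (assoc_lattice V E) M"
      using meet_irreducible_imp_nbhd[OF u] by blast
    then show "M \<in> nbhd V E ` radical_vertices V E"
      using nabla_subset[of V E M] by (auto simp: radical_vertices_iff)
  qed (auto simp: radical_vertices_iff)
qed

lemma nabla_radical_inter_nabla: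
  assumes fin: "finite V" and u: "undirected V E" and X: "X \<in> assoc_lattice V E"
  shows "nabla V E (radical_vertices V E \<inter> nabla V E X) = X"
  using X
proof (induction "card V - card X" arbitrary: X rule: less_induct)
  \<comment> \<open>A meet-reducible X is the meet of strictly larger elements, for which the claim holds.\<close>
  case less
  let ?R = "radical_vertices V E" and ?L = "assoc_lattice V E"
  let ?W = "nabla V E (?R \<inter> nabla V E X)"
  have "X \<subseteq> ?W"
    using nabla_antimono[of "?R \<inter> nabla V E X" "nabla V E X" V E] assoc_latticeD(2)[OF less.prems]
    by auto
  moreover have "?W \<subseteq> X"
  proof (cases "meet_irreducible ?L X")
    case True
    then obtain y where y: "y \<in> nabla V E X" "X = nbhd V E y"
      using meet_irreducible_imp_nbhd[OF u] by blast
    then have "y \<in> ?R \<inter> nabla V E X"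
      using True y nabla_subset[of V E X] by (auto simp: radical_vertices_iff)
    then show ?thesis
      using y(2) nabla_antimono[of "{y}"] by (simp add: nbhd_eq_nabla_singleton)
  next
    case False
    then obtain A where A: "A \<subseteq> ?L" "is_meet ?L A X" "X \<notin> A"
      using less.prems by (auto simp: meet_irreducible_def)
    have "?W \<subseteq> B" if B: "B \<in> A" for B
    proof -
      have B_lattice: "B \<in> ?L" and "X \<subset> B"
        using A B by (auto simp: is_meet_def)
      then have "card X < card B" "card B \<le> card V"
        using fin assoc_latticeD(1)[OF B_lattice] by (auto intro: psubset_card_mono card_mono finite_subset)
      then have "nabla V E (?R \<inter> nabla V E B) = B"
        using less.hyps B_lattice by simp
      moreover have "?W \<subseteq> nabla V E (?R \<inter> nabla V E B)"
        using \<open>X \<subset> B\<close> by (intro nabla_antimono) (auto dest: nabla_antimono)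
      ultimately show ?thesis by simp
    qed
    moreover have "?W \<in> ?L"
      using nabla_in_assoc_lattice[OF u] nabla_subset[of V E X] by blast
    ultimately show ?thesis
      using A(2) unfolding is_meet_def by blast
  qed
  ultimately show ?case by (rule subset_antisym[rotated])
qed

lemma nabla_radical_inter:
  assumes fin: "finite V" and u: "undirected V E" and X: "X \<in> assoc_lattice V E"
  shows "nabla V E (radical_vertices V E \<inter> X) = nabla V E X"
  using nabla_radical_inter_nabla[OF fin u nabla_in_assoc_lattice[OF u assoc_latticeD(1)[OF X]]]
  by (simp add: assoc_latticeD(2)[OF X])

lemma radical_inter_subset_iff:
  assumes fin: "finite V" and u: "undirected V E"
    and X: "X \<in> assoc_lattice V E" and Y: "Y \<in> assoc_lattice V E"
  shows "radical_vertices V E \<inter> X \<subseteq> radical_vertices V E \<inter> Y \<longleftrightarrow> X \<subseteq> Y"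
proof
  assume "radical_vertices V E \<inter> X \<subseteq> radical_vertices V E \<inter> Y"
  then have "nabla V E Y \<subseteq> nabla V E X"
    using nabla_antimono nabla_radical_inter[OF fin u X] nabla_radical_inter[OF fin u Y] by metis
  then have "nabla V E (nabla V E X) \<subseteq> nabla V E (nabla V E Y)"
    by (rule nabla_antimono)
  then show "X \<subseteq> Y"
    using assoc_latticeD(2)[OF X] assoc_latticeD(2)[OF Y] by simp
qed blast

lemma sd_lattice_iso_radical:
  assumes fin: "finite V" and u: "undirected V E"
  shows "sd_lattice_iso V E (radical_vertices V E) E ((\<inter>) (radical_vertices V E))"
proof -
  let ?R = "radical_vertices V E" and ?L = "assoc_lattice V E"
  have nabla_R: "nabla ?R E T = ?R \<inter> nabla V E T" for T
    by (rule nabla_restrict[OF radical_vertices_subset])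
  have dual: "?R \<inter> nabla V E X = nabla ?R E (?R \<inter> X)" if "X \<in> ?L" for X
    using nabla_radical_inter[OF fin u that] by (simp add: nabla_R)
  have ord: "?R \<inter> X \<subseteq> ?R \<inter> Y \<longleftrightarrow> X \<subseteq> Y" if "X \<in> ?L" "Y \<in> ?L" for X Y
    using radical_inter_subset_iff[OF fin u that] .
  have "(\<inter>) ?R ` ?L = assoc_lattice ?R E"
  proof (intro equalityI subsetI)
    fix T assume "T \<in> (\<inter>) ?R ` ?L"
    then obtain X where X: "X \<in> ?L" "T = ?R \<inter> X" by blast
    have "nabla ?R E (nabla ?R E T) = ?R \<inter> nabla V E (?R \<inter> nabla V E X)"
      using dual[OF X(1)] X(2) by (simp add: nabla_R)
    also have "\<dots> = T"
      using nabla_radical_inter_nabla[OF fin u X(1)] X(2) by simp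
    finally show "T \<in> assoc_lattice ?R E"
      using X(2) by (simp add: assoc_lattice_def)
  next
    fix T assume T: "T \<in> assoc_lattice ?R E"
    have "nabla V E (?R \<inter> nabla V E T) \<in> ?L"
      using nabla_in_assoc_lattice[OF u, of "?R \<inter> nabla V E T"] radical_vertices_subset[of V E]
      by blast
    moreover have "T = ?R \<inter> nabla V E (?R \<inter> nabla V E T)"
      using assoc_latticeD(2)[OF T] by (simp add: nabla_R)
    ultimately show "T \<in> (\<inter>) ?R ` ?L" by blast
  qed
  moreover have "inj_on ((\<inter>) ?R) ?L"
    using ord by (intro inj_onI) (metis order_refl subset_antisym)
  ultimately show ?thesis
    unfolding sd_lattice_iso_def bij_betw_def using ord dual by simp
qed

lemma sd_lattice_iso_comp:
  assumes f: "sd_lattice_iso V1 E1 V2 E2 f" and h: "sd_lattice_iso V2 E2 V3 E3 h"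
  shows "sd_lattice_iso V1 E1 V3 E3 (h \<circ> f)"
proof -
  have "f X \<in> assoc_lattice V2 E2" if "X \<in> assoc_lattice V1 E1" for X
    using f that by (auto simp: sd_lattice_iso_def bij_betw_def)
  with f h show ?thesis
    unfolding sd_lattice_iso_def by (auto intro: bij_betw_trans)
qed

lemma sd_lattice_iso_inv:
  assumes u: "undirected V1 E1" and f: "sd_lattice_iso V1 E1 V2 E2 f"
  shows "sd_lattice_iso V2 E2 V1 E1 (the_inv_into (assoc_lattice V1 E1) f)"
proof -
  let ?L1 = "assoc_lattice V1 E1" and ?L2 = "assoc_lattice V2 E2"
  let ?g = "the_inv_into ?L1 f"
  have bij: "bij_betw f ?L1 ?L2"
    and ord: "\<And>X Y. X \<in> ?L1 \<Longrightarrow> Y \<in> ?L1 \<Longrightarrow> X \<subseteq> Y \<longleftrightarrow> f X \<subseteq> f Y"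
    and dual: "\<And>X. X \<in> ?L1 \<Longrightarrow> f (nabla V1 E1 X) = nabla V2 E2 (f X)"
    using f by (auto simp: sd_lattice_iso_def)
  have g_bij: "bij_betw ?g ?L2 ?L1" by (rule bij_betw_the_inv_into[OF bij])
  have f_g: "f (?g Y) = Y" if "Y \<in> ?L2" for Y
    using f_the_inv_into_f_bij_betw[OF bij] that by blast
  have g_in: "?g Y \<in> ?L1" if "Y \<in> ?L2" for Y
    using g_bij that by (auto simp: bij_betw_def)
  have "?g (nabla V2 E2 Y) = nabla V1 E1 (?g Y)" if Y: "Y \<in> ?L2" for Y
  proof -
    have "nabla V1 E1 (?g Y) \<in> ?L1"
      using nabla_in_assoc_lattice[OF u assoc_latticeD(1)[OF g_in[OF Y]]] .
    moreover have "f (nabla V1 E1 (?g Y)) = nabla V2 E2 Y"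
      using dual[OF g_in[OF Y]] f_g[OF Y] by simp
    ultimately show ?thesis
      using the_inv_into_f_eq bij unfolding bij_betw_def by metis
  qed
  then show ?thesis
    unfolding sd_lattice_iso_def using g_bij ord g_in f_g by auto
qed

lemma graph_iso_nabla_image:
  assumes g: "graph_iso V1 E1 V2 E2 g" and X: "X \<subseteq> V1"
  shows "nabla V2 E2 (g ` X) = g ` nabla V1 E1 X"
proof -
  have gV: "g ` V1 = V2" and edge: "\<And>x y. x \<in> V1 \<Longrightarrow> y \<in> V1 \<Longrightarrow> E1 x y \<longleftrightarrow> E2 (g x) (g y)"
    using g by (auto simp: graph_iso_def bij_betw_def)
  show ?thesis
  proof (intro equalityI subsetI)
    fix y assume y: "y \<in> nabla V2 E2 (g ` X)"
    then obtain z where z: "z \<in> V1" "y = g z"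
      using gV by (auto simp: nabla_def)
    then have "z \<in> nabla V1 E1 X"
      using y X edge unfolding nabla_def by blast
    then show "y \<in> g ` nabla V1 E1 X" using z by blast
  next
    fix y assume "y \<in> g ` nabla V1 E1 X"
    then obtain z where "z \<in> nabla V1 E1 X" "y = g z" by blast
    then show "y \<in> nabla V2 E2 (g ` X)"
      using X gV edge unfolding nabla_def by blast
  qed
qed

lemma graph_iso_imp_sd_lattice_iso:
  assumes g: "graph_iso V1 E1 V2 E2 g"
  shows "sd_lattice_iso V1 E1 V2 E2 (image g)"
proof -
  let ?L1 = "assoc_lattice V1 E1" and ?L2 = "assoc_lattice V2 E2"
  have bij: "bij_betw g V1 V2" using g by (simp add: graph_iso_def)
  then have inj: "inj_on g V1" and gV: "g ` V1 = V2" by (simp_all add: bij_betw_def)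
  have bij_Pow: "bij_betw (image g) (Pow V1) (Pow V2)" by (rule bij_betw_Pow[OF bij])
  have in_L2_iff: "g ` X \<in> ?L2 \<longleftrightarrow> X \<in> ?L1" if X: "X \<subseteq> V1" for X
  proof -
    have "nabla V2 E2 (nabla V2 E2 (g ` X)) = g ` nabla V1 E1 (nabla V1 E1 X)"
      by (simp only: graph_iso_nabla_image[OF g X] graph_iso_nabla_image[OF g nabla_subset])
    moreover have "g ` nabla V1 E1 (nabla V1 E1 X) = g ` X \<longleftrightarrow> nabla V1 E1 (nabla V1 E1 X) = X"
      by (rule inj_on_image_eq_iff[OF inj nabla_subset X])
    moreover have "g ` X \<subseteq> V2" using X gV by blast
    ultimately show ?thesis
      using X by (simp add: assoc_lattice_def)
  qed
  have L1_Pow: "?L1 \<subseteq> Pow V1" by (auto simp: assoc_lattice_def)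
  have "image g ` ?L1 = ?L2"
  proof (intro equalityI subsetI)
    fix Y assume Y: "Y \<in> ?L2"
    then have "Y \<in> image g ` Pow V1"
      using bij_Pow assoc_latticeD(1)[OF Y] by (simp add: bij_betw_def)
    then obtain X where "X \<subseteq> V1" "Y = g ` X" by blast
    then show "Y \<in> image g ` ?L1" using in_L2_iff Y by blast
  next
    fix Y assume "Y \<in> image g ` ?L1"
    then obtain X where "X \<in> ?L1" "Y = g ` X" by blast
    then show "Y \<in> ?L2" using in_L2_iff L1_Pow by blast
  qed
  then have "bij_betw (image g) ?L1 ?L2" by (rule bij_betw_subset[OF bij_Pow L1_Pow])
  moreover have "X \<subseteq> Y \<longleftrightarrow> g ` X \<subseteq> g ` Y" if "X \<in> ?L1" "Y \<in> ?L1" for X Y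
  proof
    assume gXY: "g ` X \<subseteq> g ` Y"
    have X: "X \<subseteq> V1" and Y: "Y \<subseteq> V1" using that L1_Pow by blast+
    show "X \<subseteq> Y"
    proof
      fix x assume "x \<in> X"
      then have "g x \<in> g ` Y" and "x \<in> V1" using gXY X by blast+
      then show "x \<in> Y" using inj_on_image_mem_iff[OF inj _ Y] by blast
    qed
  qed (rule image_mono)
  moreover have "g ` nabla V1 E1 X = nabla V2 E2 (g ` X)" if "X \<in> ?L1" for X
    using graph_iso_nabla_image[OF g assoc_latticeD(1)[OF that]] by simp
  ultimately show ?thesis unfolding sd_lattice_iso_def by blast
qed

lemma sd_lattice_iso_imp_radical_graph_iso:
  assumes u1: "undirected V1 E1" and u2: "undirected V2 E2"
    and irr1: "irreducible_graph V1 E1" and irr2: "irreducible_graph V2 E2"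
    and f: "sd_lattice_iso V1 E1 V2 E2 f"
  shows "graph_iso (radical_vertices V1 E1) E1 (radical_vertices V2 E2) E2
           (the_inv_into (radical_vertices V2 E2) (nbhd V2 E2) \<circ> f \<circ> nbhd V1 E1)"
    (is "graph_iso ?R1 E1 ?R2 E2 ?g")
proof -
  let ?L1 = "assoc_lattice V1 E1" and ?L2 = "assoc_lattice V2 E2"
  let ?M1 = "{M. meet_irreducible ?L1 M}" and ?M2 = "{M. meet_irreducible ?L2 M}"
  have bij: "bij_betw f ?L1 ?L2"
    and ord: "\<forall>X\<in>?L1. \<forall>Y\<in>?L1. X \<subseteq> Y \<longleftrightarrow> f X \<subseteq> f Y"
    and dual: "\<forall>X\<in>?L1. f (nabla V1 E1 X) = nabla V2 E2 (f X)"
    using f by (auto simp: sd_lattice_iso_def)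
  have nbhd1: "bij_betw (nbhd V1 E1) ?R1 ?M1"
    by (rule bij_betw_nbhd_radical_vertices[OF u1 irr1])
  have nbhd2: "bij_betw (nbhd V2 E2) ?R2 ?M2"
    by (rule bij_betw_nbhd_radical_vertices[OF u2 irr2])
  have M1_L1: "?M1 \<subseteq> ?L1" by (auto simp: meet_irreducible_def)
  note irr_iff = order_iso_meet_irreducible_iff[OF bij ord]
  have "f ` ?M1 = ?M2"
  proof (intro equalityI subsetI)
    fix M assume M: "M \<in> ?M2"
    then have "M \<in> f ` ?L1" using bij by (auto simp: bij_betw_def meet_irreducible_def)
    then obtain X where "X \<in> ?L1" "M = f X" by blast
    then show "M \<in> f ` ?M1" using M irr_iff by blast
  next
    fix M assume "M \<in> f ` ?M1"
    then obtain X where "X \<in> ?M1" "M = f X" by blast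
    then show "M \<in> ?M2" using M1_L1 irr_iff by blast
  qed
  then have f_bij: "bij_betw f ?M1 ?M2" by (rule bij_betw_subset[OF bij M1_L1])
  have g_bij: "bij_betw ?g ?R1 ?R2"
    by (rule bij_betw_trans[OF nbhd1 bij_betw_trans[OF f_bij bij_betw_the_inv_into[OF nbhd2]]])
  have nbhd_g: "nbhd V2 E2 (?g x) = f (nbhd V1 E1 x)" if "x \<in> ?R1" for x
  proof -
    have "nbhd V1 E1 x \<in> ?M1" using bij_betwE[OF nbhd1] that by blast
    then have "f (nbhd V1 E1 x) \<in> nbhd V2 E2 ` ?R2"
      using bij_betwE[OF f_bij] bij_betw_imp_surj_on[OF nbhd2] by blast
    then show ?thesis
      using f_the_inv_into_f[OF bij_betw_imp_inj_on[OF nbhd2]] by simp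
  qed
  have "E1 x x' \<longleftrightarrow> E2 (?g x) (?g x')" if x: "x \<in> ?R1" and x': "x' \<in> ?R1" for x x'
  proof -
    have V1: "x \<in> V1" "x' \<in> V1" using x x' radical_vertices_subset[of V1 E1] by blast+
    have V2: "?g x \<in> V2" "?g x' \<in> V2"
      using bij_betwE[OF g_bij] x x' radical_vertices_subset[of V2 E2] by blast+
    have N: "nbhd V1 E1 x \<in> ?L1" "nbhd V1 E1 x' \<in> ?L1"
      using nbhd_in_assoc_lattice[OF u1 V1(1)] nbhd_in_assoc_lattice[OF u1 V1(2)] .
    have "E1 x x' \<longleftrightarrow> nabla V1 E1 (nbhd V1 E1 x') \<subseteq> nbhd V1 E1 x"
      by (rule edge_iff_nabla_nbhd_subset[OF u1 V1])
    also have "\<dots> \<longleftrightarrow> f (nabla V1 E1 (nbhd V1 E1 x')) \<subseteq> f (nbhd V1 E1 x)"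
      by (rule ord[rule_format, OF nabla_in_assoc_lattice[OF u1 assoc_latticeD(1)[OF N(2)]] N(1)])
    also have "\<dots> \<longleftrightarrow> nabla V2 E2 (nbhd V2 E2 (?g x')) \<subseteq> nbhd V2 E2 (?g x)"
      using dual N(2) nbhd_g[OF x] nbhd_g[OF x'] by simp
    also have "\<dots> \<longleftrightarrow> E2 (?g x) (?g x')"
      by (rule edge_iff_nabla_nbhd_subset[OF u2 V2, symmetric])
    finally show ?thesis .
  qed
  with g_bij show ?thesis by (simp add: graph_iso_def)
qed

lemma radical_graph_iso_imp_sd_lattice_iso:
  assumes fin1: "finite V1" and fin2: "finite V2"
    and u1: "undirected V1 E1" and u2: "undirected V2 E2"
    and g: "graph_iso (radical_vertices V1 E1) E1 (radical_vertices V2 E2) E2 g"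
  shows "sd_lattice_iso V1 E1 V2 E2
           (the_inv_into (assoc_lattice V2 E2) ((\<inter>) (radical_vertices V2 E2))
              \<circ> (image g \<circ> (\<inter>) (radical_vertices V1 E1)))"
  by (rule sd_lattice_iso_comp[OF
        sd_lattice_iso_comp[OF sd_lattice_iso_radical[OF fin1 u1] graph_iso_imp_sd_lattice_iso[OF g]]
        sd_lattice_iso_inv[OF u2 sd_lattice_iso_radical[OF fin2 u2]]])

theorem mainTheorem17:
  fixes V1 :: "'a set" and E1 :: "'a \<Rightarrow> 'a \<Rightarrow> bool"
    and V2 :: "'b set" and E2 :: "'b \<Rightarrow> 'b \<Rightarrow> bool"
  assumes "finite V1" and "finite V2"
    and "undirected V1 E1" and "undirected V2 E2"
    and "irreducible_graph V1 E1" and "irreducible_graph V2 E2"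
  shows "(\<exists>f. sd_lattice_iso V1 E1 V2 E2 f) \<longleftrightarrow>
         (\<exists>g. graph_iso (radical_vertices V1 E1) E1 (radical_vertices V2 E2) E2 g)"
  using sd_lattice_iso_imp_radical_graph_iso[OF assms(3-6)]
    radical_graph_iso_imp_sd_lattice_iso[OF assms(1-4)]
  by blast

end
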